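(* Let $L$ be a semiprime right Leibniz algebra and $Q$ an algebra of quotients of $L$. Then for every essential ideal $I$ of $L$, $Q$ is also an algebra of quotients of $I$.
   Context: A right Leibniz algebra satisfies $[x,[y,z]]=[[x,y],z]-[[x,z],y]$. Ideals: subspaces $I$ with $[I,L]\subseteq I$, $[L,I]\subseteq I$; $L$ is semiprime if $[I,I]\ne\{0\}$ for every nonzero ideal $I$; an ideal is essential if it meets every nonzero ideal nontrivially. For a subalgebra $K$ of $Q$ and $q\in Q$: for $x\in K$ let $R_x(u)=[u,x]$, $L_x(u)=[x,u]$ on $Q$, $\mathscr{A}(K)$ the associative algebra they generate, ${}_K(q)=\mathbb{F}q+\{\sum\xi_i(q):\xi_i\in\mathscr{A}(K)\}$, $(K:q)=\{x\in K:[x,{}_K(q)]\subseteq K,[{}_K(q),x]\subseteq K\}$. $Q$ is an algebra of quotients of $K$ if for all $p,q\in Q$, $p\ne0$, there is $x\in(K:q)$ with $[x,p]\ne0$ or $y\in(K:q)$ with $[p,y]\ne0$. *)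

theory Defs
  imports Main "HOL.Vector_Spaces"
begin

definition leibniz_alg :: "('k::field \<Rightarrow> 'v::ab_group_add \<Rightarrow> 'v) \<Rightarrow> ('v \<Rightarrow> 'v \<Rightarrow> 'v) \<Rightarrow> bool" where
  "leibniz_alg scale br \<longleftrightarrow>
     vector_space scale \<and>
     (\<forall>x y z. br (x + y) z = br x z + br y z) \<and>
     (\<forall>x y z. br x (y + z) = br x y + br x z) \<and>
     (\<forall>c x y. br (scale c x) y = scale c (br x y)) \<and>
     (\<forall>c x y. br x (scale c y) = scale c (br x y)) \<and>
     (\<forall>x y z. br x (br y z) = br (br x y) z - br (br x z) y)"

definition subalg :: "('k::field \<Rightarrow> 'v::ab_group_add \<Rightarrow> 'v) \<Rightarrow> ('v \<Rightarrow> 'v \<Rightarrow> 'v) \<Rightarrow> 'v set \<Rightarrow> bool" where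
  "subalg scale br K \<longleftrightarrow> module.subspace scale K \<and> (\<forall>x\<in>K. \<forall>y\<in>K. br x y \<in> K)"

definition ideal_of :: "('k::field \<Rightarrow> 'v::ab_group_add \<Rightarrow> 'v) \<Rightarrow> ('v \<Rightarrow> 'v \<Rightarrow> 'v) \<Rightarrow> 'v set \<Rightarrow> 'v set \<Rightarrow> bool" where
  "ideal_of scale br L I \<longleftrightarrow> I \<subseteq> L \<and> module.subspace scale I \<and>
     (\<forall>x\<in>I. \<forall>y\<in>L. br x y \<in> I \<and> br y x \<in> I)"

text \<open>[I,I] \<noteq> {0} iff some bracket of elements of I is nonzero.\<close>
definition semiprime :: "('k::field \<Rightarrow> 'v::ab_group_add \<Rightarrow> 'v) \<Rightarrow> ('v \<Rightarrow> 'v \<Rightarrow> 'v) \<Rightarrow> 'v set \<Rightarrow> bool" where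
  "semiprime scale br L \<longleftrightarrow>
     (\<forall>I. ideal_of scale br L I \<and> I \<noteq> {0} \<longrightarrow> (\<exists>x\<in>I. \<exists>y\<in>I. br x y \<noteq> 0))"

definition essential_ideal :: "('k::field \<Rightarrow> 'v::ab_group_add \<Rightarrow> 'v) \<Rightarrow> ('v \<Rightarrow> 'v \<Rightarrow> 'v) \<Rightarrow> 'v set \<Rightarrow> 'v set \<Rightarrow> bool" where
  "essential_ideal scale br L I \<longleftrightarrow> ideal_of scale br L I \<and>
     (\<forall>J. ideal_of scale br L J \<and> J \<noteq> {0} \<longrightarrow> I \<inter> J \<noteq> {0})"

text \<open>The associative algebra \<A>(K) of operators on Q generated by the R_x, L_x (x \<in> K).\<close>
inductive_set mult_alg :: "('k::field \<Rightarrow> 'v::ab_group_add \<Rightarrow> 'v) \<Rightarrow> ('v \<Rightarrow> 'v \<Rightarrow> 'v) \<Rightarrow> 'v set \<Rightarrow> ('v \<Rightarrow> 'v) set"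
  for scale :: "'k::field \<Rightarrow> 'v::ab_group_add \<Rightarrow> 'v" and br :: "'v \<Rightarrow> 'v \<Rightarrow> 'v" and K :: "'v set" where
  R_gen: "x \<in> K \<Longrightarrow> (\<lambda>u. br u x) \<in> mult_alg scale br K"
| L_gen: "x \<in> K \<Longrightarrow> (\<lambda>u. br x u) \<in> mult_alg scale br K"
| comp: "f \<in> mult_alg scale br K \<Longrightarrow> g \<in> mult_alg scale br K \<Longrightarrow> f \<circ> g \<in> mult_alg scale br K"
| add: "f \<in> mult_alg scale br K \<Longrightarrow> g \<in> mult_alg scale br K \<Longrightarrow> (\<lambda>u. f u + g u) \<in> mult_alg scale br K"
| smult: "f \<in> mult_alg scale br K \<Longrightarrow> (\<lambda>u. scale c (f u)) \<in> mult_alg scale br K"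

text \<open>{}_K(q) = F q + { \<Sum> \<xi>_i(q) : \<xi>_i \<in> \<A>(K) }  (the algebra is closed under sums).\<close>
definition gen_by :: "('k::field \<Rightarrow> 'v::ab_group_add \<Rightarrow> 'v) \<Rightarrow> ('v \<Rightarrow> 'v \<Rightarrow> 'v) \<Rightarrow> 'v set \<Rightarrow> 'v \<Rightarrow> 'v set" where
  "gen_by scale br K q = {scale c q + s | c s. s = 0 \<or> (\<exists>\<xi>\<in>mult_alg scale br K. s = \<xi> q)}"

definition colon :: "('k::field \<Rightarrow> 'v::ab_group_add \<Rightarrow> 'v) \<Rightarrow> ('v \<Rightarrow> 'v \<Rightarrow> 'v) \<Rightarrow> 'v set \<Rightarrow> 'v \<Rightarrow> 'v set" where
  "colon scale br K q = {x \<in> K. \<forall>u\<in>gen_by scale br K q. br x u \<in> K \<and> br u x \<in> K}"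

text \<open>The whole algebra (type 'v) is an algebra of quotients of K.\<close>
definition alg_of_quotients :: "('k::field \<Rightarrow> 'v::ab_group_add \<Rightarrow> 'v) \<Rightarrow> ('v \<Rightarrow> 'v \<Rightarrow> 'v) \<Rightarrow> 'v set \<Rightarrow> bool" where
  "alg_of_quotients scale br K \<longleftrightarrow>
     (\<forall>p q. p \<noteq> 0 \<longrightarrow> (\<exists>x\<in>colon scale br K q. br x p \<noteq> 0) \<or> (\<exists>y\<in>colon scale br K q. br p y \<noteq> 0))"

end

theory Submission
  imports Defs
begin

(* Since Q is an algebra of quotients of L, the ideal (L:q) meets every
   nonzero ideal of L; hence J = I \<inter> (L:q) is essential and, L being semiprime, so is the span
   of [J,J]. An essential ideal K of a semiprime L annihilates no nonzero p \<in> Q: its annihilator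
   in L is an ideal meeting K in an ideal of square zero, hence is zero, and if K annihilated p it
   would also annihilate [x,p], [p,x] \<in> L, where x \<in> (L:p) makes one of them nonzero. So some
   [a,c] with a, c \<in> J does not annihilate p, and all such brackets lie in (I:q). *)

lemma mult_alg_mono:
  assumes "K \<subseteq> L"
  shows "mult_alg scale br K \<subseteq> mult_alg scale br L"
proof
  fix f assume "f \<in> mult_alg scale br K"
  then show "f \<in> mult_alg scale br L"
    by induction (use assms in \<open>blast intro: mult_alg.intros\<close>)+
qed

lemma gen_by_mono: "K \<subseteq> L \<Longrightarrow> gen_by scale br K q \<subseteq> gen_by scale br L q"
  unfolding gen_by_def using mult_alg_mono by blast

locale leibniz_algebra =
  fixes scale :: "'k::field \<Rightarrow> 'v::ab_group_add \<Rightarrow> 'v"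
    and br :: "'v \<Rightarrow> 'v \<Rightarrow> 'v"
  assumes leibniz_alg: "leibniz_alg scale br"
begin

sublocale V: vector_space scale
  using leibniz_alg by (simp add: leibniz_alg_def)

lemma bracket_add_left: "br (x + y) z = br x z + br y z"
  using leibniz_alg by (simp add: leibniz_alg_def)

lemma bracket_add_right: "br x (y + z) = br x y + br x z"
  using leibniz_alg by (simp add: leibniz_alg_def)

lemma bracket_scale_left: "br (scale c x) y = scale c (br x y)"
  using leibniz_alg by (simp add: leibniz_alg_def)

lemma bracket_scale_right: "br x (scale c y) = scale c (br x y)"
  using leibniz_alg by (simp add: leibniz_alg_def)

lemma leibniz_right: "br x (br y z) = br (br x y) z - br (br x z) y"
  using leibniz_alg by (simp add: leibniz_alg_def)

lemma leibniz_left: "br (br x y) z = br x (br y z) + br (br x z) y"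
  using leibniz_right[of x y z] by (simp add: algebra_simps)

lemma bracket_zero_left [simp]: "br 0 z = 0"
  using bracket_add_left[of 0 0 z] by simp

lemma bracket_zero_right [simp]: "br z 0 = 0"
  using bracket_add_right[of z 0 0] by simp

lemma subspace_bracket_into:
  assumes "V.subspace U"
  shows "V.subspace {x. \<forall>u\<in>S. br x u \<in> U \<and> br u x \<in> U}"
  using assms
  by (intro V.subspaceI)
    (auto simp: bracket_add_left bracket_add_right bracket_scale_left bracket_scale_right
      intro: V.subspace_0 V.subspace_add V.subspace_scale)

lemma ideal_of_Int:
  "ideal_of scale br L A \<Longrightarrow> ideal_of scale br L B \<Longrightarrow> ideal_of scale br L (A \<inter> B)"
  unfolding ideal_of_def using V.subspace_inter by auto

lemma essential_ideal_Int:
  assumes "essential_ideal scale br L I" and "essential_ideal scale br L J"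
  shows "essential_ideal scale br L (I \<inter> J)"
  using assms ideal_of_Int unfolding essential_ideal_def by (metis Int_assoc)

definition annihilator :: "'v set \<Rightarrow> 'v set" where
  "annihilator S = {v. \<forall>s\<in>S. br s v = 0 \<and> br v s = 0}"

lemma zero_mem_annihilator: "0 \<in> annihilator S"
  by (simp add: annihilator_def)

lemma subspace_annihilator: "V.subspace (annihilator S)"
  unfolding annihilator_def
  by (intro V.subspaceI)
    (auto simp: bracket_add_left bracket_add_right bracket_scale_left bracket_scale_right)

lemma annihilator_span: "annihilator (V.span S) = annihilator S"
proof -
  have mem_iff: "v \<in> annihilator T \<longleftrightarrow> T \<subseteq> annihilator {v}" for v T
    by (auto simp: annihilator_def)
  show ?thesis
    using V.span_minimal[OF _ subspace_annihilator] V.span_superset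
    unfolding set_eq_iff mem_iff by blast
qed

lemma bracket_mem_annihilator:
  assumes K: "ideal_of scale br L K" and x: "x \<in> L" and v: "v \<in> annihilator K"
  shows "br x v \<in> annihilator K" and "br v x \<in> annihilator K"
proof -
  have kx: "br k x \<in> K" "br x k \<in> K" and kv: "br k v = 0" "br v k = 0" if "k \<in> K" for k
    using K x v that unfolding ideal_of_def annihilator_def by auto
  show "br x v \<in> annihilator K"
    unfolding annihilator_def by (auto simp: leibniz_right[of _ x v] leibniz_left[of x v] kx kv)
  show "br v x \<in> annihilator K"
    unfolding annihilator_def by (auto simp: leibniz_right[of _ v x] leibniz_left[of v x] kx kv)
qed

lemma ideal_annihilator:
  assumes "subalg scale br L" and "ideal_of scale br L K"
  shows "ideal_of scale br L (L \<inter> annihilator K)"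
  using assms bracket_mem_annihilator V.subspace_inter[OF _ subspace_annihilator]
  unfolding ideal_of_def subalg_def by auto

lemma Int_annihilator_essential_ideal:
  assumes L: "subalg scale br L" and sp: "semiprime scale br L"
    and K: "essential_ideal scale br L K"
  shows "L \<inter> annihilator K = {0}"
proof -
  have K_ideal: "ideal_of scale br L K"
    using K unfolding essential_ideal_def by blast
  have A: "ideal_of scale br L (L \<inter> annihilator K)"
    using ideal_annihilator[OF L K_ideal] .
  have "\<forall>x\<in>K \<inter> (L \<inter> annihilator K). \<forall>y\<in>K \<inter> (L \<inter> annihilator K). br x y = 0"
    by (auto simp: annihilator_def)
  then have "K \<inter> (L \<inter> annihilator K) = {0}"
    using sp ideal_of_Int[OF K_ideal A] unfolding semiprime_def by blast
  then show ?thesis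
    using K A unfolding essential_ideal_def by blast
qed

definition ideal_square :: "'v set \<Rightarrow> 'v set" where
  "ideal_square J = V.span {br a c | a c. a \<in> J \<and> c \<in> J}"

lemma ideal_ideal_square:
  assumes L: "subalg scale br L" and J: "ideal_of scale br L J"
  shows "ideal_of scale br L (ideal_square J)"
proof -
  let ?G = "{br a c | a c. a \<in> J \<and> c \<in> J}"
  have J_closed: "br a y \<in> J" "br y a \<in> J" if "a \<in> J" "y \<in> L" for a y
    using J that unfolding ideal_of_def by auto
  have "?G \<subseteq> J" and "J \<subseteq> L" and "V.subspace J"
    using J unfolding ideal_of_def by auto
  then have "ideal_square J \<subseteq> L"
    unfolding ideal_square_def using V.span_minimal by blast
  moreover have "br s y \<in> ideal_square J \<and> br y s \<in> ideal_square J"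
    if s: "s \<in> ideal_square J" and y: "y \<in> L" for s y
  proof -
    have "?G \<subseteq> {x. \<forall>u\<in>{y}. br x u \<in> V.span ?G \<and> br u x \<in> V.span ?G}"
    proof clarsimp
      fix a c assume "a \<in> J" "c \<in> J"
      then have "br a (br c y) \<in> V.span ?G" "br (br a y) c \<in> V.span ?G"
        "br (br y a) c \<in> V.span ?G" "br (br y c) a \<in> V.span ?G"
        using y J_closed by (blast intro: V.span_base)+
      then show "br (br a c) y \<in> V.span ?G \<and> br y (br a c) \<in> V.span ?G"
        by (simp add: leibniz_left[of a c y] leibniz_right[of y a c] V.span_add V.span_diff)
    qed
    from V.span_minimal[OF this subspace_bracket_into] s show ?thesis
      unfolding ideal_square_def by blast
  qed
  ultimately show ?thesis
    unfolding ideal_of_def ideal_square_def by auto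
qed

lemma essential_ideal_square:
  assumes L: "subalg scale br L" and sp: "semiprime scale br L"
    and J: "essential_ideal scale br L J"
  shows "essential_ideal scale br L (ideal_square J)"
  unfolding essential_ideal_def
proof (intro conjI allI impI)
  have J_ideal: "ideal_of scale br L J"
    using J unfolding essential_ideal_def by blast
  then show "ideal_of scale br L (ideal_square J)"
    by (rule ideal_ideal_square[OF L])
  fix K assume K: "ideal_of scale br L K \<and> K \<noteq> {0}"
  then have "ideal_of scale br L (J \<inter> K)" and "J \<inter> K \<noteq> {0}"
    using J ideal_of_Int[OF J_ideal] unfolding essential_ideal_def by blast+
  then obtain a c where a: "a \<in> J \<inter> K" and c: "c \<in> J \<inter> K" and "br a c \<noteq> 0"
    using sp unfolding semiprime_def by blast
  moreover have "br a c \<in> K"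
    using K a c J_ideal unfolding ideal_of_def by blast
  moreover have "br a c \<in> ideal_square J"
    using a c unfolding ideal_square_def by (blast intro: V.span_base)
  ultimately show "ideal_square J \<inter> K \<noteq> {0}"
    by blast
qed

lemma apply_mem_gen_by: "\<xi> \<in> mult_alg scale br K \<Longrightarrow> \<xi> q \<in> gen_by scale br K q"
  unfolding gen_by_def by (rule CollectI, rule exI[of _ 0]) auto

lemma self_mem_gen_by: "q \<in> gen_by scale br K q"
  unfolding gen_by_def by (rule CollectI, rule exI[of _ 1]) auto

lemma gen_by_cases:
  assumes "K \<noteq> {}" and "u \<in> gen_by scale br K q"
  obtains c \<xi> where "\<xi> \<in> mult_alg scale br K" and "u = scale c q + \<xi> q"
proof -
  obtain c s where u: "u = scale c q + s"
    and s: "s = 0 \<or> (\<exists>\<xi>\<in>mult_alg scale br K. s = \<xi> q)"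
    using assms(2) unfolding gen_by_def by blast
  obtain l where "l \<in> K"
    using assms(1) by blast
  then have "(\<lambda>v. scale 0 (br v l)) \<in> mult_alg scale br K"
    by (intro mult_alg.smult mult_alg.R_gen)
  then have "(\<lambda>_. 0) \<in> mult_alg scale br K"
    by simp
  with s obtain \<xi> where "\<xi> \<in> mult_alg scale br K" and "s = \<xi> q"
    by auto
  with u show thesis
    using that by blast
qed

lemma bracket_mem_gen_by:
  assumes l: "l \<in> K" and u: "u \<in> gen_by scale br K q"
  shows "br l u \<in> gen_by scale br K q" and "br u l \<in> gen_by scale br K q"
proof -
  obtain c \<xi> where \<xi>: "\<xi> \<in> mult_alg scale br K" and u_eq: "u = scale c q + \<xi> q"
    using l gen_by_cases[OF _ u] by blast
  have L: "(\<lambda>v. br l v) \<in> mult_alg scale br K" and R: "(\<lambda>v. br v l) \<in> mult_alg scale br K"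
    using l by (rule mult_alg.L_gen, rule mult_alg.R_gen)
  have "(\<lambda>v. scale c (br l v) + ((\<lambda>v. br l v) \<circ> \<xi>) v) \<in> mult_alg scale br K"
    by (intro mult_alg.add mult_alg.smult mult_alg.comp L \<xi>)
  from apply_mem_gen_by[OF this, of q] show "br l u \<in> gen_by scale br K q"
    by (simp add: u_eq bracket_add_right bracket_scale_right)
  have "(\<lambda>v. scale c (br v l) + ((\<lambda>v. br v l) \<circ> \<xi>) v) \<in> mult_alg scale br K"
    by (intro mult_alg.add mult_alg.smult mult_alg.comp R \<xi>)
  from apply_mem_gen_by[OF this, of q] show "br u l \<in> gen_by scale br K q"
    by (simp add: u_eq bracket_add_left bracket_scale_left)
qed

lemma ideal_colon:
  assumes L: "subalg scale br L"
  shows "ideal_of scale br L (colon scale br L q)"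
proof -
  let ?D = "colon scale br L q" and ?U = "gen_by scale br L q"
  have L_subspace: "V.subspace L" and L_closed: "\<And>x y. x \<in> L \<Longrightarrow> y \<in> L \<Longrightarrow> br x y \<in> L"
    using L unfolding subalg_def by auto
  have "?D = L \<inter> {x. \<forall>u\<in>?U. br x u \<in> L \<and> br u x \<in> L}"
    unfolding colon_def by blast
  then have "V.subspace ?D"
    using V.subspace_inter[OF L_subspace subspace_bracket_into[OF L_subspace]] by simp
  moreover have "br x l \<in> ?D \<and> br l x \<in> ?D" if x: "x \<in> ?D" and l: "l \<in> L" for x l
  proof -
    have xu: "br x u \<in> L" "br u x \<in> L" if "u \<in> ?U" for u
      using x that unfolding colon_def by auto
    have "br (br x l) u \<in> L \<and> br u (br x l) \<in> L \<and> br (br l x) u \<in> L \<and> br u (br l x) \<in> L"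
      if u: "u \<in> ?U" for u
    proof (intro conjI)
      have lu: "br x (br l u) \<in> L" "br (br l u) x \<in> L" "br (br u l) x \<in> L"
        using xu bracket_mem_gen_by[OF l u] by auto
      have ux: "br (br x u) l \<in> L" "br (br u x) l \<in> L" "br l (br x u) \<in> L"
        using xu[OF u] l L_closed by auto
      show "br (br x l) u \<in> L"
        unfolding leibniz_left[of x l u] using lu ux by (intro V.subspace_add[OF L_subspace])
      show "br u (br x l) \<in> L"
        unfolding leibniz_right[of u x l] using lu ux by (intro V.subspace_diff[OF L_subspace])
      show "br (br l x) u \<in> L"
        unfolding leibniz_left[of l x u] using lu ux by (intro V.subspace_add[OF L_subspace])
      show "br u (br l x) \<in> L"
        unfolding leibniz_right[of u l x] using lu ux by (intro V.subspace_diff[OF L_subspace])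
    qed
    moreover have "br x l \<in> L" "br l x \<in> L"
      using x l L_closed unfolding colon_def by auto
    ultimately show ?thesis
      unfolding colon_def by blast
  qed
  moreover have "?D \<subseteq> L"
    unfolding colon_def by blast
  ultimately show ?thesis
    unfolding ideal_of_def by blast
qed

lemma essential_colon:
  assumes L: "subalg scale br L" and Q: "alg_of_quotients scale br L"
  shows "essential_ideal scale br L (colon scale br L q)"
  unfolding essential_ideal_def
proof (intro conjI allI impI ideal_colon[OF L])
  let ?D = "colon scale br L q"
  fix K assume K: "ideal_of scale br L K \<and> K \<noteq> {0}"
  then obtain k where k: "k \<in> K" "k \<noteq> 0"
    using V.subspace_0 unfolding ideal_of_def by blast
  then obtain x where x: "x \<in> ?D" and "br x k \<noteq> 0 \<or> br k x \<noteq> 0"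
    using Q unfolding alg_of_quotients_def by blast
  moreover have "br x k \<in> K \<inter> ?D" and "br k x \<in> K \<inter> ?D"
    using K k x ideal_colon[OF L] unfolding ideal_of_def by blast+
  ultimately show "?D \<inter> K \<noteq> {0}"
    by blast
qed

lemma bracket_mem_colon:
  assumes I: "ideal_of scale br L I"
    and a: "a \<in> I \<inter> colon scale br L q" and c: "c \<in> I \<inter> colon scale br L q"
  shows "br a c \<in> colon scale br I q"
proof -
  have I_subspace: "V.subspace I" and "I \<subseteq> L"
    and I_closed: "\<And>x y. x \<in> I \<Longrightarrow> y \<in> L \<Longrightarrow> br x y \<in> I \<and> br y x \<in> I"
    using I unfolding ideal_of_def by auto
  have "br a c \<in> I"
    using a c I_closed \<open>I \<subseteq> L\<close> by blast
  moreover have "br (br a c) u \<in> I \<and> br u (br a c) \<in> I" if "u \<in> gen_by scale br I q" for u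
  proof -
    have "u \<in> gen_by scale br L q"
      using that gen_by_mono[OF \<open>I \<subseteq> L\<close>] by blast
    then have "br a u \<in> L" "br u a \<in> L" "br c u \<in> L" "br u c \<in> L"
      using a c unfolding colon_def by auto
    then show ?thesis
      using a c I_closed V.subspace_add[OF I_subspace] V.subspace_diff[OF I_subspace]
      by (simp add: leibniz_left[of a c u] leibniz_right[of u a c])
  qed
  ultimately show ?thesis
    unfolding colon_def by blast
qed

lemma annihilator_essential_ideal:
  assumes L: "subalg scale br L" and sp: "semiprime scale br L"
    and Q: "alg_of_quotients scale br L" and K: "essential_ideal scale br L K"
  shows "annihilator K = {0}"
proof -
  have "p = 0" if p: "p \<in> annihilator K" for p
  proof (rule ccontr)
    assume "p \<noteq> 0"
    then obtain x where x: "x \<in> colon scale br L p" and nz: "br x p \<noteq> 0 \<or> br p x \<noteq> 0"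
      using Q unfolding alg_of_quotients_def by blast
    then have "x \<in> L" "br x p \<in> L" "br p x \<in> L"
      using self_mem_gen_by unfolding colon_def by auto
    moreover have "br x p \<in> annihilator K" "br p x \<in> annihilator K"
      using K \<open>x \<in> L\<close> p unfolding essential_ideal_def by (blast intro: bracket_mem_annihilator)+
    ultimately show False
      using Int_annihilator_essential_ideal[OF L sp K] nz by blast
  qed
  then show ?thesis
    using zero_mem_annihilator by blast
qed

end

theorem proposition3p13:
  fixes scale :: "'k::field \<Rightarrow> 'v::ab_group_add \<Rightarrow> 'v"
    and br :: "'v \<Rightarrow> 'v \<Rightarrow> 'v"
    and L I :: "'v set"
  assumes "leibniz_alg scale br"
    and "subalg scale br L"
    and "semiprime scale br L"
    and "alg_of_quotients scale br L"
    and "essential_ideal scale br L I"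
  shows "alg_of_quotients scale br I"
  unfolding alg_of_quotients_def
proof (intro allI impI)
  interpret leibniz_algebra scale br
    using assms(1) by (rule leibniz_algebra.intro)
  fix p q :: 'v assume "p \<noteq> 0"
  define J where "J = I \<inter> colon scale br L q"
  have "essential_ideal scale br L J"
    unfolding J_def using assms(5) essential_colon[OF assms(2,4)] by (rule essential_ideal_Int)
  then have "annihilator (ideal_square J) = {0}"
    by (rule annihilator_essential_ideal[OF assms(2-4) essential_ideal_square[OF assms(2,3)]])
  then have "p \<notin> annihilator {br a c | a c. a \<in> J \<and> c \<in> J}"
    using \<open>p \<noteq> 0\<close> annihilator_span unfolding ideal_square_def by auto
  then obtain a c where "a \<in> J" "c \<in> J" and "br (br a c) p \<noteq> 0 \<or> br p (br a c) \<noteq> 0"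
    unfolding annihilator_def by blast
  moreover have "br a c \<in> colon scale br I q"
    using assms(5) \<open>a \<in> J\<close> \<open>c \<in> J\<close> unfolding J_def essential_ideal_def
    by (blast intro: bracket_mem_colon)
  ultimately show "(\<exists>x\<in>colon scale br I q. br x p \<noteq> 0) \<or> (\<exists>y\<in>colon scale br I q. br p y \<noteq> 0)"
    by blast
qed

end
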